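(* Let $g$ solve system (S3) with initial data $h_{ii}>0$ satisfying either $h_{11}=h_{22}<h_{33}$, or $h_{11}<h_{22}=h_{33}<4h_{11}$. Then the solution exists for all $t\ge0$, and, with $\kappa = (4\det h - h_{00}h_{22}^3)\,h_{00}^3h_{22}$: (i) $(4\det h - g_{00}g_{22}^3)\,g_{00}^3g_{22} = \kappa$ for all $t$; (ii) $g_{00}\to (\kappa/3)^{3/8}(\det h)^{-1/2}$ and $g_{11},g_{22},g_{33}\to (3/\kappa)^{1/8}(\det h)^{1/2}$ as $t\to\infty$; (iii) if $h_{11}=h_{22}$, then $g_{11}$ and $g_{22}$ are increasing and $g_{33}$ is decreasing; (iv) if $h_{22}=h_{33}$, then $g_{11}$ is increasing.
   Context: Let $\det h = h_{00}h_{11}h_{22}h_{33}$, $\beta=\frac{1}{6(\det h)^2}$, and $p(x,y,z) = x^4 - x^3(y+z) + x^2yz + x(-y^3+y^2z+yz^2-z^3) + y^4 - y^3z - yz^3 + z^4$, $q(x,y,z) = 5x^4 - 3x^3(y+z) + x^2yz + x(y^3-y^2z-yz^2+z^3) - 3y^4 + 3y^3z + 3yz^3 - 3z^4$. System (S3): $\dot g_{00} = -\beta\,p(g_{11},g_{22},g_{33})\,g_{00}^3$, $\dot g_{11} = -\beta\,q(g_{11},g_{22},g_{33})\,g_{00}^2g_{11}$, $\dot g_{22} = -\beta\,q(g_{22},g_{33},g_{11})\,g_{00}^2g_{22}$, $\dot g_{33} = -\beta\,q(g_{33},g_{11},g_{22})\,g_{00}^2g_{33}$, $g_{ii}(0)=h_{ii}$.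 This is Bach flow $\partial_tg=B$ on $\mathbb{R}\times\mathbb{S}^3$ in a diagonalizing left-invariant frame $\{\partial_0,e_1,e_2,e_3\}$ with $[e_i,e_j]=\sum_k\varepsilon_{ijk}e_k$ and $g=\mathrm{diag}(g_{00},g_{11},g_{22},g_{33})$; along the flow $g_{00}g_{11}g_{22}g_{33}=\det h$. *)

theory Defs
  imports "HOL-Analysis.Analysis"
begin

definition bach_p :: "real \<Rightarrow> real \<Rightarrow> real \<Rightarrow> real" where
  "bach_p x y z = x^4 - x^3*(y+z) + x^2*y*z + x*(-(y^3) + y^2*z + y*z^2 - z^3)
                  + y^4 - y^3*z - y*z^3 + z^4"

definition bach_q :: "real \<Rightarrow> real \<Rightarrow> real \<Rightarrow> real" where
  "bach_q x y z = 5*x^4 - 3*x^3*(y+z) + x^2*y*z + x*(y^3 - y^2*z - y*z^2 + z^3)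
                  - 3*y^4 + 3*y^3*z + 3*y*z^3 - 3*z^4"

text \<open>det h = h00 h11 h22 h33 and beta = 1 / (6 (det h)^2).\<close>
definition bach_beta :: "real \<Rightarrow> real" where
  "bach_beta dh = 1 / (6 * dh^2)"

definition solves_S3 ::
  "real \<Rightarrow> real \<Rightarrow> real \<Rightarrow> real \<Rightarrow>
   (real \<Rightarrow> real) \<Rightarrow> (real \<Rightarrow> real) \<Rightarrow> (real \<Rightarrow> real) \<Rightarrow> (real \<Rightarrow> real) \<Rightarrow> bool" where
  "solves_S3 h0 h1 h2 h3 g0 g1 g2 g3 \<longleftrightarrow>
     (let \<beta> = bach_beta (h0*h1*h2*h3) in
      g0 0 = h0 \<and> g1 0 = h1 \<and> g2 0 = h2 \<and> g3 0 = h3 \<and>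
      (\<forall>t\<ge>0.
        (g0 has_real_derivative (- \<beta> * bach_p (g1 t) (g2 t) (g3 t) * (g0 t)^3)) (at t within {0..}) \<and>
        (g1 has_real_derivative (- \<beta> * bach_q (g1 t) (g2 t) (g3 t) * (g0 t)^2 * g1 t)) (at t within {0..}) \<and>
        (g2 has_real_derivative (- \<beta> * bach_q (g2 t) (g3 t) (g1 t) * (g0 t)^2 * g2 t)) (at t within {0..}) \<and>
        (g3 has_real_derivative (- \<beta> * bach_q (g3 t) (g1 t) (g2 t) * (g0 t)^2 * g3 t)) (at t within {0..})))"

end

theory Submission
  imports Defs
begin

text \<open>If two of \<open>g\<^sub>1\<^sub>1, g\<^sub>2\<^sub>2, g\<^sub>3\<^sub>3\<close> agree initially they agree forever, and (S3) becomes a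
  system for \<open>w = g\<^sub>0\<^sub>0\<close>, the odd coordinate \<open>x\<close> and the repeated one \<open>y\<close>. It conserves
  \<open>w x y\<^sup>2 = det h\<close> and \<open>w\<^sup>4 y\<^sup>3 (4x - y) = \<kappa>\<close>, and the ratio \<open>r = x / y\<close> satisfies
  \<open>r' = -2\<beta> (det h / y)\<^sup>2 r (r - 1) (4r - 1)\<close>. So \<open>r\<close> moves monotonically towards \<open>1\<close>, \<open>4r > 1\<close>
  persists, \<open>y\<close> stays bounded by the second law, and \<open>(r - 1)\<^sup>2\<close> decreases at a rate bounded
  below while it stays away from \<open>0\<close>; hence \<open>r \<rightarrow> 1\<close> and the conservation laws give the limits of \<open>w, x, y\<close>.
  Conversely, solving the scalar equation for \<open>r\<close> by inverting \<open>t = \<integral> dr / r'\<close> and reading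
  \<open>w, x, y\<close> off the conservation laws yields a global solution.\<close>

section \<open>Differential inequalities on \<open>[0, \<infinity>)\<close>\<close>

lemma mvt_on_nonneg:
  fixes f f' :: "real \<Rightarrow> real"
  assumes deriv: "\<And>t. 0 \<le> t \<Longrightarrow> (f has_real_derivative f' t) (at t within {0..})"
    and "0 \<le> r" "r < s"
  shows "\<exists>z\<in>{r<..<s}. f s - f r = f' z * (s - r)"
proof -
  have "(f has_derivative (\<lambda>h. f' z * h)) (at z within {r..s})" if "r \<le> z" "z \<le> s" for z
    using deriv[of z] that \<open>0 \<le> r\<close>
    by (auto simp: has_field_derivative_def intro: has_derivative_subset)
  then show ?thesis using mvt_simple[OF \<open>r < s\<close>, of f "\<lambda>z h. f' z * h"] by simp
qed

lemma strict_mono_on_nonneg_if_deriv_pos: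
  fixes f f' :: "real \<Rightarrow> real"
  assumes deriv: "\<And>t. 0 \<le> t \<Longrightarrow> (f has_real_derivative f' t) (at t within {0..})"
    and pos: "\<And>t. 0 \<le> t \<Longrightarrow> f' t > 0"
  shows "strict_mono_on {0..} f"
proof (rule strict_mono_onI)
  fix r s :: real assume "r \<in> {0..}" "r < s"
  then obtain z where z: "r < z" "f s - f r = f' z * (s - r)"
    using mvt_on_nonneg[OF deriv, of r s] by auto
  have "f' z * (s - r) > 0" using pos[of z] z \<open>r \<in> {0..}\<close> \<open>r < s\<close> by simp
  with z show "f r < f s" by simp
qed

lemma strict_antimono_on_nonneg_if_deriv_neg:
  fixes f f' :: "real \<Rightarrow> real"
  assumes "\<And>t. 0 \<le> t \<Longrightarrow> (f has_real_derivative f' t) (at t within {0..})"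
    and "\<And>t. 0 \<le> t \<Longrightarrow> f' t < 0"
  shows "strict_antimono_on {0..} f"
proof -
  have "strict_mono_on {0..} (\<lambda>t. - f t)"
    using assms by (intro strict_mono_on_nonneg_if_deriv_pos[of _ "\<lambda>t. - f' t"]) (auto intro: DERIV_minus)
  then show ?thesis by (auto simp: monotone_on_def)
qed

lemma antimono_on_nonneg_if_deriv_nonpos:
  fixes f f' :: "real \<Rightarrow> real"
  assumes deriv: "\<And>t. 0 \<le> t \<Longrightarrow> (f has_real_derivative f' t) (at t within {0..})"
    and nonpos: "\<And>t. 0 \<le> t \<Longrightarrow> f' t \<le> 0"
  shows "antimono_on {0..} f"
proof (rule monotone_onI)
  fix r s :: real assume "r \<in> {0..}" "r \<le> s"
  show "f s \<le> f r"
  proof (cases "r = s")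
    case False
    with \<open>r \<in> {0..}\<close> \<open>r \<le> s\<close> obtain z where z: "r < z" "f s - f r = f' z * (s - r)"
      using mvt_on_nonneg[OF deriv, of r s] by auto
    have "f' z * (s - r) \<le> 0"
      using nonpos[of z] z \<open>r \<in> {0..}\<close> \<open>r \<le> s\<close> by (simp add: mult_nonpos_nonneg)
    with z show ?thesis by simp
  qed simp
qed

lemma constant_on_nonneg_if_deriv_zero:
  fixes f :: "real \<Rightarrow> real"
  assumes "\<And>t. 0 \<le> t \<Longrightarrow> (f has_real_derivative 0) (at t within {0..})" and "0 \<le> t"
  shows "f t = f 0"
proof -
  obtain c where "\<forall>s\<in>{0..}. f s = c"
    using has_field_derivative_zero_constant[of "{0..}" f] assms(1) by auto
  with \<open>0 \<le> t\<close> show ?thesis by simp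
qed

lemma continuous_on_nonneg_if_deriv:
  fixes f f' :: "real \<Rightarrow> real"
  assumes "\<And>t. 0 \<le> t \<Longrightarrow> (f has_real_derivative f' t) (at t within {0..})"
  shows "continuous_on {0..} f"
  using assms by (auto simp: continuous_on_eq_continuous_within intro: DERIV_continuous)

lemma linear_ode_solution:
  fixes v k :: "real \<Rightarrow> real"
  assumes deriv: "\<And>t. 0 \<le> t \<Longrightarrow> (v has_real_derivative k t * v t) (at t within {0..})"
    and cont: "continuous_on {0..} k" and "0 \<le> T"
  shows "v T = v 0 * exp (integral {0..T} k)"
proof -
  define K where "K = (\<lambda>s. integral {0..s} k)"
  have "((\<lambda>s. v s * exp (- K s)) has_real_derivative 0) (at s within {0..T})" if "s \<in> {0..T}" for s
  proof -
    have Kd: "(K has_real_derivative k s) (at s within {0..T})"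
      using integral_has_vector_derivative[OF continuous_on_subset[OF cont, of "{0..T}"] that]
      by (auto simp: K_def has_real_derivative_iff_has_vector_derivative)
    have vd: "(v has_real_derivative k s * v s) (at s within {0..T})"
      using deriv[of s] that by (auto intro: has_field_derivative_subset)
    have "((\<lambda>s. exp (- K s)) has_real_derivative exp (- K s) * - k s) (at s within {0..T})"
      by (rule DERIV_chain2[OF DERIV_exp DERIV_minus[OF Kd]])
    from DERIV_mult[OF vd this] show ?thesis by (simp add: algebra_simps)
  qed
  then obtain c where "\<forall>s\<in>{0..T}. v s * exp (- K s) = c"
    using has_field_derivative_zero_constant[of "{0..T}" "\<lambda>s. v s * exp (- K s)"] by auto
  then have "v T * exp (- K T) = v 0 * exp (- K 0)" using \<open>0 \<le> T\<close> by simp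
  moreover have "K 0 = 0" by (simp add: K_def)
  ultimately have "v T * exp (- K T) = v 0" by simp
  then have "v T = v 0 * exp (K T)"
    by (metis mult.assoc mult.right_neutral exp_minus_inverse mult.commute)
  then show ?thesis by (simp add: K_def)
qed

lemma linear_ode_sgn:
  fixes v k :: "real \<Rightarrow> real"
  assumes "\<And>t. 0 \<le> t \<Longrightarrow> (v has_real_derivative k t * v t) (at t within {0..})"
    and "continuous_on {0..} k" and "0 \<le> t"
  shows "sgn (v t) = sgn (v 0)"
  using linear_ode_solution[OF assms] by (simp add: sgn_mult)

lemma tendsto_zero_if_deriv_bounded_away:
  fixes u u' :: "real \<Rightarrow> real"
  assumes deriv: "\<And>t. 0 \<le> t \<Longrightarrow> (u has_real_derivative u' t) (at t within {0..})"
    and nonneg: "\<And>t. 0 \<le> t \<Longrightarrow> u t \<ge> 0"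
    and nonpos: "\<And>t. 0 \<le> t \<Longrightarrow> u' t \<le> 0"
    and rate: "\<And>\<epsilon>. \<epsilon> > 0 \<Longrightarrow> \<exists>c>0. \<forall>t\<ge>0. u t \<ge> \<epsilon> \<longrightarrow> u' t \<le> - c"
  shows "(u \<longlongrightarrow> 0) at_top"
proof (rule order_tendstoI)
  fix \<epsilon> :: real assume "\<epsilon> > 0"
  obtain c where "c > 0" and c: "\<forall>t\<ge>0. u t \<ge> \<epsilon> \<longrightarrow> u' t \<le> - c"
    using rate[OF \<open>\<epsilon> > 0\<close>] by blast
  have "\<exists>t\<^sub>1\<ge>0. u t\<^sub>1 < \<epsilon>"
  proof (rule ccontr)
    assume "\<not> ?thesis"
    then have large: "\<forall>t\<ge>0. u t \<ge> \<epsilon>" by (simp add: not_less)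
    \<comment> \<open>then \<open>u t + c t\<close> is nonincreasing, which fails at \<open>t = u 0 / c\<close>\<close>
    have shifted: "antimono_on {0..} (\<lambda>t. u t + c * t)"
    proof (rule antimono_on_nonneg_if_deriv_nonpos)
      show "((\<lambda>t. u t + c * t) has_real_derivative u' t + c * 1) (at t within {0..})" if "0 \<le> t" for t
        by (rule DERIV_add[OF deriv[OF that] DERIV_cmult[OF DERIV_ident]])
      show "u' t + c * 1 \<le> 0" if "0 \<le> t" for t
      proof -
        have "\<epsilon> \<le> u t" using large that by blast
        then have "u' t \<le> - c" using c that by blast
        then show ?thesis by simp
      qed
    qed
    have "u 0 / c \<in> {0..}" using nonneg[of 0] \<open>c > 0\<close> by simp
    then have "u (u 0 / c) + c * (u 0 / c) \<le> u 0 + c * 0"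
      using monotone_onD[OF shifted, of 0 "u 0 / c"] by simp
    moreover have "u (u 0 / c) \<ge> \<epsilon>" using large \<open>u 0 / c \<in> {0..}\<close> by simp
    ultimately show False using \<open>\<epsilon> > 0\<close> \<open>c > 0\<close> by simp
  qed
  then obtain t\<^sub>1 where "t\<^sub>1 \<ge> 0" "u t\<^sub>1 < \<epsilon>" by blast
  moreover have "u t \<le> u t\<^sub>1" if "t \<ge> t\<^sub>1" for t
    using monotone_onD[OF antimono_on_nonneg_if_deriv_nonpos[OF deriv nonpos], of t\<^sub>1 t]
      that \<open>t\<^sub>1 \<ge> 0\<close> by simp
  ultimately show "eventually (\<lambda>t. u t < \<epsilon>) at_top"
    unfolding eventually_at_top_linorder by (meson order_le_less_trans)
next
  fix \<epsilon> :: real assume "\<epsilon> < 0"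
  with nonneg show "eventually (\<lambda>t. \<epsilon> < u t) at_top"
    unfolding eventually_at_top_linorder by (meson order_less_le_trans)
qed

section \<open>Autonomous scalar equations\<close>

lemma ode_solution_of_inverse_primitive:
  fixes T f :: "real \<Rightarrow> real" and a b r\<^sub>0 :: real
  assumes "a < r\<^sub>0" "r\<^sub>0 < b"
    and T_deriv: "\<And>s. a < s \<Longrightarrow> s < b \<Longrightarrow> (T has_real_derivative f s) (at s)"
    and f_pos: "\<And>s. a < s \<Longrightarrow> s < b \<Longrightarrow> f s > 0"
    and "T r\<^sub>0 = 0"
    and T_unbounded: "\<And>t. 0 \<le> t \<Longrightarrow> \<exists>s. r\<^sub>0 \<le> s \<and> s < b \<and> t \<le> T s"
  shows "\<exists>\<rho>. \<rho> 0 = r\<^sub>0 \<and>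
    (\<forall>t\<ge>0. r\<^sub>0 \<le> \<rho> t \<and> \<rho> t < b \<and> (\<rho> has_real_derivative inverse (f (\<rho> t))) (at t))"
proof -
  define S where "S = {a<..<b}"
  have "strict_mono_on S T"
  proof (rule strict_mono_onI)
    fix s s' assume "s \<in> S" "s' \<in> S" "s < s'"
    show "T s < T s'"
    proof (rule DERIV_pos_imp_increasing[OF \<open>s < s'\<close>])
      fix z assume "s \<le> z" "z \<le> s'"
      with \<open>s \<in> S\<close> \<open>s' \<in> S\<close> have "a < z" "z < b" by (auto simp: S_def)
      then show "\<exists>l. (T has_real_derivative l) (at z) \<and> 0 < l"
        using T_deriv f_pos by blast
    qed
  qed
  then have inj: "inj_on T S" by (rule strict_mono_on_imp_inj_on)
  have cont: "continuous_on S T"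
    using DERIV_isCont[OF T_deriv] by (intro continuous_at_imp_continuous_on) (simp add: S_def)
  define \<rho> where "\<rho> = the_inv_into S T"
  have \<rho>_T: "\<rho> (T s) = s" if "s \<in> S" for s
    unfolding \<rho>_def using inj that by (rule the_inv_into_f_f)
  have "r\<^sub>0 \<le> \<rho> t \<and> \<rho> t < b \<and> (\<rho> has_real_derivative inverse (f (\<rho> t))) (at t)"
    if "0 \<le> t" for t
  proof -
    obtain s' where s': "r\<^sub>0 \<le> s'" "s' < b" "t \<le> T s'" using T_unbounded[OF \<open>0 \<le> t\<close>] by blast
    have "continuous_on {r\<^sub>0..s'} T"
      using \<open>a < r\<^sub>0\<close> s' by (intro continuous_on_subset[OF cont]) (auto simp: S_def)
    then obtain s where s: "r\<^sub>0 \<le> s" "s \<le> s'" "T s = t"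
      using IVT'[of T r\<^sub>0 t s'] \<open>T r\<^sub>0 = 0\<close> \<open>0 \<le> t\<close> s' by auto
    have "s \<in> S" using s s' \<open>a < r\<^sub>0\<close> by (simp add: S_def)
    then have "\<rho> t = s" using \<rho>_T s(3) by blast
    moreover have "(\<rho> has_real_derivative inverse (f s)) (at t)"
      unfolding has_field_derivative_def
    proof (rule has_derivative_inverse_strong_x[of S \<rho> t T])
      show "(T has_derivative (*) (f s)) (at (\<rho> t))"
        using T_deriv[of s] \<open>s \<in> S\<close> \<open>\<rho> t = s\<close> by (simp add: S_def has_field_derivative_def)
      show "(*) (f s) \<circ> (*) (inverse (f s)) = id"
        using f_pos[of s] \<open>s \<in> S\<close> by (auto simp: S_def)
    qed (use \<open>s \<in> S\<close> \<open>\<rho> t = s\<close> s(3) \<rho>_T cont in \<open>auto simp: S_def\<close>)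
    ultimately show ?thesis using s s' by simp
  qed
  moreover have "\<rho> 0 = r\<^sub>0"
    using \<rho>_T[of r\<^sub>0] \<open>T r\<^sub>0 = 0\<close> assms(1,2) by (simp add: S_def)
  ultimately show ?thesis by blast
qed

lemma unbounded_if_deriv_ge_inverse_distance:
  fixes T f :: "real \<Rightarrow> real" and b r\<^sub>0 M t :: real
  assumes "r\<^sub>0 < b" "M > 0" "0 \<le> t"
    and T_deriv: "\<And>s. r\<^sub>0 \<le> s \<Longrightarrow> s < b \<Longrightarrow> (T has_real_derivative f s) (at s)"
    and f_ge: "\<And>s. r\<^sub>0 \<le> s \<Longrightarrow> s < b \<Longrightarrow> 1 / ((b - s) * M) \<le> f s"
  shows "\<exists>s. r\<^sub>0 \<le> s \<and> s < b \<and> t \<le> T s - T r\<^sub>0"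
proof (intro exI conjI)
  \<comment> \<open>comparison with the primitive \<open>- ln (b - s) / M\<close> of \<open>1 / (M (b - s))\<close>\<close>
  have T_lower: "(ln (b - r\<^sub>0) - ln (b - s)) / M \<le> T s - T r\<^sub>0" if "r\<^sub>0 \<le> s" "s < b" for s
  proof -
    have "T r\<^sub>0 + ln (b - r\<^sub>0) / M \<le> T s + ln (b - s) / M"
    proof (rule DERIV_nonneg_imp_nondecreasing[OF \<open>r\<^sub>0 \<le> s\<close>])
      fix z assume "r\<^sub>0 \<le> z" "z \<le> s"
      then have z: "r\<^sub>0 \<le> z" "z < b" using that by auto
      have "((\<lambda>z. T z + ln (b - z) / M) has_real_derivative f z - 1 / ((b - z) * M)) (at z)"
        using z T_deriv[OF z] \<open>M > 0\<close> by (auto intro!: derivative_eq_intros simp: field_simps)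
      with f_ge[OF z] show "\<exists>l. ((\<lambda>z. T z + ln (b - z) / M) has_real_derivative l) (at z) \<and> 0 \<le> l"
        by auto
    qed
    then show ?thesis by (simp add: diff_divide_distrib)
  qed
  define s where "s = b - (b - r\<^sub>0) * exp (- M * t)"
  have "(b - r\<^sub>0) * exp (- M * t) \<le> b - r\<^sub>0"
    using assms(1-3) by (intro mult_right_le_one_le) auto
  then show "r\<^sub>0 \<le> s" unfolding s_def by linarith
  have "0 < (b - r\<^sub>0) * exp (- M * t)"
    using \<open>r\<^sub>0 < b\<close> by simp
  then show "s < b" unfolding s_def by linarith
  have "ln (b - s) = ln (b - r\<^sub>0) - M * t"
    using \<open>r\<^sub>0 < b\<close> by (simp add: s_def ln_mult)
  then show "t \<le> T s - T r\<^sub>0"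
    using T_lower[OF \<open>r\<^sub>0 \<le> s\<close> \<open>s < b\<close>] \<open>M > 0\<close> by simp
qed

lemma ode_solution_increasing_to_equilibrium:
  fixes G :: "real \<Rightarrow> real" and a b r\<^sub>0 :: real
  assumes "a < r\<^sub>0" "r\<^sub>0 < b"
    and G_cont: "continuous_on {a..b} G" and G_pos: "\<And>s. a \<le> s \<Longrightarrow> s \<le> b \<Longrightarrow> G s > 0"
  shows "\<exists>\<rho>. \<rho> 0 = r\<^sub>0 \<and>
    (\<forall>t\<ge>0. r\<^sub>0 \<le> \<rho> t \<and> \<rho> t < b \<and> (\<rho> has_real_derivative (b - \<rho> t) * G (\<rho> t)) (at t))"
proof -
  define f where "f s = 1 / ((b - s) * G s)" for s
  define T where "T s = integral {a..s} f - integral {a..r\<^sub>0} f" for s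
  have T_deriv: "(T has_real_derivative f s) (at s)" if "a < s" "s < b" for s
  proof -
    define c where "c = (s + b) / 2"
    have "s < c" "c < b" using that by (auto simp: c_def)
    have "continuous_on {a..c} f"
      unfolding f_def using \<open>c < b\<close> G_pos
      by (intro continuous_intros continuous_on_subset[OF G_cont]) force+
    then have "((\<lambda>s. integral {a..s} f) has_real_derivative f s) (at s within {a..c})"
      using \<open>s < c\<close> that
      by (auto simp: has_real_derivative_iff_has_vector_derivative intro: integral_has_vector_derivative)
    moreover have "at s within {a..c} = at s"
      using that \<open>s < c\<close> by (intro at_within_interior) auto
    ultimately show ?thesis unfolding T_def by (auto intro!: derivative_eq_intros)
  qed
  obtain M where "M > 0" and G_le: "\<And>s. a \<le> s \<Longrightarrow> s \<le> b \<Longrightarrow> G s \<le> M"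
  proof -
    have "compact (G ` {a..b})" by (rule compact_continuous_image[OF G_cont]) simp
    then obtain M where "\<forall>s\<in>{a..b}. \<bar>G s\<bar> \<le> M"
      by (auto dest!: compact_imp_bounded simp: bounded_real)
    with that[of "max M 1"] show ?thesis by force
  qed
  have "1 / ((b - s) * M) \<le> f s" if "r\<^sub>0 \<le> s" "s < b" for s
    unfolding f_def using that \<open>a < r\<^sub>0\<close> G_pos[of s] G_le[of s]
    by (intro divide_left_mono mult_left_mono mult_pos_pos) auto
  then have "\<exists>s. r\<^sub>0 \<le> s \<and> s < b \<and> t \<le> T s" if "0 \<le> t" for t
    using unbounded_if_deriv_ge_inverse_distance[OF \<open>r\<^sub>0 < b\<close> \<open>M > 0\<close> that, of T f] T_deriv \<open>a < r\<^sub>0\<close>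
    by (simp add: T_def)
  from ode_solution_of_inverse_primitive[OF assms(1,2) T_deriv _ _ this] G_pos
  obtain \<rho> where "\<rho> 0 = r\<^sub>0"
    and "\<And>t. 0 \<le> t \<Longrightarrow> r\<^sub>0 \<le> \<rho> t \<and> \<rho> t < b \<and> (\<rho> has_real_derivative inverse (f (\<rho> t))) (at t)"
    by (force simp: f_def T_def)
  then show ?thesis by (auto simp: f_def)
qed

lemma ode_solution_towards_equilibrium:
  fixes G :: "real \<Rightarrow> real" and a b r\<^sub>0 :: real
  assumes "a < r\<^sub>0" "a < b"
    and G_cont: "continuous_on {a<..} G" and G_pos: "\<And>s. a < s \<Longrightarrow> G s > 0"
  shows "\<exists>\<rho>. \<rho> 0 = r\<^sub>0 \<and> (\<forall>t\<ge>0. a < \<rho> t \<and> (\<rho> has_real_derivative (b - \<rho> t) * G (\<rho> t)) (at t))"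
proof (cases r\<^sub>0 b rule: linorder_cases)
  case less
  define a' where "a' = (a + r\<^sub>0) / 2"
  have "a < a'" "a' < r\<^sub>0" using \<open>a < r\<^sub>0\<close> by (auto simp: a'_def)
  have "continuous_on {a'..b} G"
    using \<open>a < a'\<close> by (intro continuous_on_subset[OF G_cont]) auto
  with ode_solution_increasing_to_equilibrium[OF \<open>a' < r\<^sub>0\<close> less] G_pos \<open>a < a'\<close>
  obtain \<rho> where "\<rho> 0 = r\<^sub>0" and "\<forall>t\<ge>0. r\<^sub>0 \<le> \<rho> t \<and> \<rho> t < b \<and>
      (\<rho> has_real_derivative (b - \<rho> t) * G (\<rho> t)) (at t)"
    by force
  then show ?thesis using \<open>a < r\<^sub>0\<close> by force
next
  case equal
  then show ?thesis using \<open>a < r\<^sub>0\<close> by (intro exI[of _ "\<lambda>_. r\<^sub>0"]) auto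
next
  case greater
  \<comment> \<open>reflect \<open>s \<mapsto> - s\<close> to reduce to the increasing case\<close>
  have "continuous_on {- r\<^sub>0 - 1 .. - b} (\<lambda>s. G (- s))"
    using \<open>a < b\<close> by (intro continuous_on_compose2[OF G_cont] continuous_intros) auto
  with ode_solution_increasing_to_equilibrium[of "- r\<^sub>0 - 1" "- r\<^sub>0" "- b" "\<lambda>s. G (- s)"]
    greater G_pos \<open>a < b\<close>
  obtain \<rho> where "\<rho> 0 = - r\<^sub>0" and \<rho>: "\<forall>t\<ge>0. - r\<^sub>0 \<le> \<rho> t \<and> \<rho> t < - b \<and>
      (\<rho> has_real_derivative (- b - \<rho> t) * G (- \<rho> t)) (at t)"
    by force
  have "a < - \<rho> t \<and> ((\<lambda>t. - \<rho> t) has_real_derivative (b - - \<rho> t) * G (- \<rho> t)) (at t)"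
    if "0 \<le> t" for t
    using \<rho> that \<open>a < b\<close> DERIV_minus[of \<rho> "(- b - \<rho> t) * G (- \<rho> t)" t] by (auto simp: algebra_simps)
  then show ?thesis using \<open>\<rho> 0 = - r\<^sub>0\<close> by (intro exI[of _ "\<lambda>t. - \<rho> t"]) auto
qed

section \<open>The flow of (S3) with two equal spatial coordinates\<close>

text \<open>(S3) with \<open>g\<^sub>2\<^sub>2 = g\<^sub>3\<^sub>3\<close>, writing \<open>w, x, y\<close> for \<open>g\<^sub>0\<^sub>0, g\<^sub>1\<^sub>1, g\<^sub>2\<^sub>2\<close>; the right-hand sides are
  \<open>bach_p x y y\<close> and \<open>bach_q x y y\<close>, \<open>bach_q y y x\<close> in factored form, and only \<open>\<beta> > 0\<close> matters.\<close>

locale bach_reduced_flow =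
  fixes \<beta> :: real and w x y :: "real \<Rightarrow> real"
  assumes beta_pos: "\<beta> > 0"
    and init_pos: "w 0 > 0" "x 0 > 0" "y 0 > 0"
    and init_y_lt_4x: "y 0 < 4 * x 0"
    and w_deriv: "\<And>t. 0 \<le> t \<Longrightarrow>
      (w has_real_derivative - \<beta> * x t^2 * (x t - y t)^2 * w t^3) (at t within {0..})"
    and x_deriv: "\<And>t. 0 \<le> t \<Longrightarrow>
      (x has_real_derivative - \<beta> * x t^2 * (5 * x t - y t) * (x t - y t) * w t^2 * x t)
        (at t within {0..})"
    and y_deriv: "\<And>t. 0 \<le> t \<Longrightarrow>
      (y has_real_derivative - \<beta> * x t^2 * (y t - x t) * (3 * x t - y t) * w t^2 * y t)
        (at t within {0..})"
begin

lemma continuous_on_wxy: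
  "continuous_on {0..} w" "continuous_on {0..} x" "continuous_on {0..} y"
  by (rule continuous_on_nonneg_if_deriv, erule w_deriv x_deriv y_deriv)+

lemma positive:
  assumes "0 \<le> t"
  shows w_pos: "w t > 0" and x_pos: "x t > 0" and y_pos: "y t > 0"
proof -
  have "sgn (w t) = sgn (w 0)"
  proof (rule linear_ode_sgn[OF _ _ assms])
    show "(w has_real_derivative (- \<beta> * x s^2 * (x s - y s)^2 * w s^2) * w s) (at s within {0..})"
      if "0 \<le> s" for s
      by (rule DERIV_cong[OF w_deriv[OF that]]) algebra
  qed (intro continuous_intros continuous_on_wxy)
  then show "w t > 0" using init_pos by (simp add: sgn_if split: if_splits)
  have "sgn (x t) = sgn (x 0)"
  proof (rule linear_ode_sgn[OF _ _ assms])
    show "(x has_real_derivative (- \<beta> * x s^2 * (5 * x s - y s) * (x s - y s) * w s^2) * x s)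
        (at s within {0..})" if "0 \<le> s" for s
      using x_deriv[OF that] by simp
  qed (intro continuous_intros continuous_on_wxy)
  then show "x t > 0" using init_pos by (simp add: sgn_if split: if_splits)
  have "sgn (y t) = sgn (y 0)"
  proof (rule linear_ode_sgn[OF _ _ assms])
    show "(y has_real_derivative (- \<beta> * x s^2 * (y s - x s) * (3 * x s - y s) * w s^2) * y s)
        (at s within {0..})" if "0 \<le> s" for s
      using y_deriv[OF that] by simp
  qed (intro continuous_intros continuous_on_wxy)
  then show "y t > 0" using init_pos by (simp add: sgn_if split: if_splits)
qed

lemma sgn_x_minus_y:
  assumes "0 \<le> t"
  shows "sgn (x t - y t) = sgn (x 0 - y 0)"
proof (rule linear_ode_sgn[OF _ _ assms])
  show "((\<lambda>t. x t - y t) has_real_derivative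
      (- \<beta> * x s^2 * w s^2 * (5 * x s^2 + 2 * x s * y s - y s^2)) * (x s - y s)) (at s within {0..})"
    if "0 \<le> s" for s
    by (rule DERIV_cong[OF DERIV_diff[OF x_deriv[OF that] y_deriv[OF that]]]) algebra
qed (intro continuous_intros continuous_on_wxy)

lemma y_lt_4x:
  assumes "0 \<le> t"
  shows "y t < 4 * x t"
proof -
  have "sgn (4 * x t - y t) = sgn (4 * x 0 - y 0)"
  proof (rule linear_ode_sgn[OF _ _ assms])
    show "((\<lambda>t. 4 * x t - y t) has_real_derivative
        (- \<beta> * x s^2 * w s^2 * (x s - y s) * (5 * x s + y s)) * (4 * x s - y s)) (at s within {0..})"
      if "0 \<le> s" for s
      by (rule DERIV_cong[OF DERIV_diff[OF DERIV_cmult[OF x_deriv[OF that]] y_deriv[OF that]]]) algebra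
  qed (intro continuous_intros continuous_on_wxy)
  then show ?thesis using init_y_lt_4x by (simp add: sgn_if split: if_splits)
qed

definition vol :: real where
  "vol = w 0 * x 0 * y 0^2"

definition kappa :: real where
  "kappa = (4 * vol - w 0 * y 0^3) * w 0^3 * y 0"

lemma vol_pos: "vol > 0"
  using init_pos by (simp add: vol_def)

lemma kappa_eq: "kappa = w 0^4 * y 0^3 * (4 * x 0 - y 0)"
  unfolding kappa_def vol_def by algebra

lemma kappa_pos: "kappa > 0"
  using init_pos init_y_lt_4x by (simp add: kappa_eq)

lemma vol_const:
  assumes "0 \<le> t"
  shows "w t * x t * y t^2 = vol"
proof -
  have "((\<lambda>t. w t * x t * y t^2) has_real_derivative 0) (at s within {0..})" if "0 \<le> s" for s
    apply (rule derivative_eq_intros w_deriv[OF that] x_deriv[OF that] y_deriv[OF that] refl)+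
    by simp algebra
  from constant_on_nonneg_if_deriv_zero[OF this assms] show ?thesis by (simp add: vol_def)
qed

lemma kappa_const:
  assumes "0 \<le> t"
  shows "w t^4 * y t^3 * (4 * x t - y t) = kappa"
proof -
  have "((\<lambda>t. w t^4 * y t^3 * (4 * x t - y t)) has_real_derivative 0) (at s within {0..})"
    if "0 \<le> s" for s
    apply (rule derivative_eq_intros w_deriv[OF that] x_deriv[OF that] y_deriv[OF that] refl)+
    by simp algebra
  from constant_on_nonneg_if_deriv_zero[OF this assms] show ?thesis by (simp add: kappa_eq)
qed

lemma kappa_invariant:
  assumes "0 \<le> t"
  shows "(4 * vol - w t * y t^3) * w t^3 * y t = kappa"
  using kappa_const[OF assms] vol_const[OF assms, symmetric] by (simp add: algebra_simps power_def)

end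

lemma le_max_min_if_sq_le_same_sgn:
  fixes a b :: real
  assumes "a^2 \<le> b^2" and "sgn a = sgn b"
  shows "min b 0 \<le> a" and "a \<le> max b 0"
proof -
  have "\<bar>a\<bar> \<le> \<bar>b\<bar>" using assms(1) by (simp add: abs_le_square_iff)
  with assms(2) show "min b 0 \<le> a" "a \<le> max b 0"
    by (auto simp: sgn_if split: if_splits)
qed

lemma powr_limit_identities:
  fixes D \<kappa> :: real
  assumes "D > 0" "\<kappa> > 0"
  shows "(3 * D^4 / \<kappa>) powr (1/8) = (3/\<kappa>) powr (1/8) * D powr (1/2)"
    and "D / ((3/\<kappa>) powr (1/8) * D powr (1/2))^3 = (\<kappa>/3) powr (3/8) * D powr (-1/2)"
proof -
  have "(3 * D^4 / \<kappa>) powr (1/8) = (3/\<kappa> * D powr 4) powr (1/8)"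
    using assms by (simp add: powr_realpow)
  also have "\<dots> = (3/\<kappa>) powr (1/8) * (D powr 4) powr (1/8)"
    by (rule powr_mult)
  also have "(D powr 4) powr (1/8) = D powr (1/2)"
    by (simp add: powr_powr)
  finally show "(3 * D^4 / \<kappa>) powr (1/8) = (3/\<kappa>) powr (1/8) * D powr (1/2)" .
  have "((3/\<kappa>) powr (1/8) * D powr (1/2))^3 = (3/\<kappa>) powr (3/8) * D powr (3/2)"
    using assms by (simp add: power_mult_distrib powr_realpow[symmetric] powr_powr)
  moreover have "D powr (3/2) = D * D powr (1/2)" and "D powr (-1/2) = 1 / D powr (1/2)"
    using assms by (simp_all add: powr_add[of D 1 "1/2", simplified] powr_minus_divide)
  moreover have "(3/\<kappa>) powr (3/8) = 1 / (\<kappa>/3) powr (3/8)"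
    using assms by (simp add: powr_divide)
  ultimately show "D / ((3/\<kappa>) powr (1/8) * D powr (1/2))^3 = (\<kappa>/3) powr (3/8) * D powr (-1/2)"
    using assms by (simp add: field_simps)
qed

context bach_reduced_flow
begin

definition ratio :: "real \<Rightarrow> real" where
  "ratio t = x t / y t"

lemma ratio_pos: "0 \<le> t \<Longrightarrow> ratio t > 0"
  using positive by (simp add: ratio_def)

lemma four_ratio_gt_1: "0 \<le> t \<Longrightarrow> 4 * ratio t > 1"
  using y_lt_4x y_pos by (simp add: ratio_def field_simps)

lemma ratio_deriv:
  assumes "0 \<le> t"
  shows "(ratio has_real_derivative
      - 2 * \<beta> * (vol / y t)^2 * ratio t * (ratio t - 1) * (4 * ratio t - 1)) (at t within {0..})"
proof -
  have "y t \<noteq> 0" using y_pos[OF assms] by simp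
  have "((\<lambda>t. x t / y t) has_real_derivative - 2 * \<beta> * (w t * x t * y t)^2
      * (x t / y t) * (x t / y t - 1) * (4 * (x t / y t) - 1)) (at t within {0..})"
    apply (rule derivative_eq_intros x_deriv[OF assms] y_deriv[OF assms] refl | fact)+
    using \<open>y t \<noteq> 0\<close> by (simp add: field_simps) algebra
  moreover have "w t * x t * y t = vol / y t"
    using vol_const[OF assms] \<open>y t \<noteq> 0\<close> by (simp add: field_simps power2_eq_square)
  ultimately show ?thesis by (simp add: ratio_def[abs_def])
qed

lemma ratio_dist_deriv:
  assumes "0 \<le> t"
  shows "((\<lambda>t. (ratio t - 1)^2) has_real_derivative
      - (4 * \<beta> * (vol / y t)^2 * ratio t * (4 * ratio t - 1) * (ratio t - 1)^2)) (at t within {0..})"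
  apply (rule derivative_eq_intros ratio_deriv[OF assms] refl)+
  by simp algebra

lemma ratio_dist_deriv_nonpos:
  "0 \<le> t \<Longrightarrow> - (4 * \<beta> * (vol / y t)^2 * ratio t * (4 * ratio t - 1) * (ratio t - 1)^2) \<le> 0"
  using beta_pos ratio_pos[of t] four_ratio_gt_1[of t] by simp

lemma ratio_between:
  assumes "0 \<le> t"
  shows "min (ratio 0) 1 \<le> ratio t" and "ratio t \<le> max (ratio 0) 1"
proof -
  have "(ratio t - 1)^2 \<le> (ratio 0 - 1)^2"
    using monotone_onD[OF antimono_on_nonneg_if_deriv_nonpos[OF ratio_dist_deriv
          ratio_dist_deriv_nonpos], of 0 t] assms by simp
  moreover have "sgn (ratio t - 1) = sgn (ratio 0 - 1)"
  proof -
    have "sgn (ratio s - 1) = sgn (x s - y s)" if "0 \<le> s" for s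
    proof -
      have "ratio s - 1 = (x s - y s) / y s"
        using y_pos[OF that] by (simp add: ratio_def field_simps)
      then show ?thesis using y_pos[OF that] by simp
    qed
    then show ?thesis using sgn_x_minus_y[OF assms] assms by simp
  qed
  ultimately show "min (ratio 0) 1 \<le> ratio t" "ratio t \<le> max (ratio 0) 1"
    using le_max_min_if_sq_le_same_sgn[of "ratio t - 1" "ratio 0 - 1"] by auto
qed

lemma x_pow8: "0 \<le> t \<Longrightarrow> x t^8 * kappa = vol^4 * ratio t^4 * (4 * ratio t - 1)"
  using kappa_const[of t] vol_const[of t, symmetric] y_pos[of t]
  by (simp add: ratio_def field_simps) algebra

lemma y_pow8: "0 \<le> t \<Longrightarrow> y t^8 * ratio t^4 * kappa = vol^4 * (4 * ratio t - 1)"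
  using kappa_const[of t] vol_const[of t, symmetric] y_pos[of t]
  by (simp add: ratio_def field_simps) algebra

end

context bach_reduced_flow
begin

lemma y_bounded:
  obtains B where "B > 0" and "\<And>t. 0 \<le> t \<Longrightarrow> y t \<le> B"
proof -
  define m where "m = min (ratio 0) 1"
  define C where "C = 4 * vol^4 / (m^3 * kappa)"
  have "m > 0" using ratio_pos[of 0] by (simp add: m_def)
  have "y t \<le> max 1 C" if "0 \<le> t" for t
  proof -
    have r: "m \<le> ratio t" "0 < ratio t"
      using ratio_between(1)[OF that] ratio_pos[OF that] by (auto simp: m_def)
    have "(y t^8 * ratio t^3 * kappa) * ratio t = y t^8 * ratio t^4 * kappa"
      by algebra
    also have "\<dots> = vol^4 * (4 * ratio t - 1)"
      by (rule y_pow8[OF that])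
    also have "\<dots> \<le> (4 * vol^4) * ratio t"
      using vol_pos by simp
    finally have "(y t^8 * ratio t^3 * kappa) * ratio t \<le> (4 * vol^4) * ratio t" .
    then have "y t^8 * ratio t^3 * kappa \<le> 4 * vol^4"
      using r(2) by simp
    then have "y t^8 \<le> 4 * vol^4 / (ratio t^3 * kappa)"
      using r kappa_pos by (simp add: field_simps)
    also have "\<dots> \<le> C"
      unfolding C_def using r \<open>m > 0\<close> kappa_pos vol_pos
      by (intro divide_left_mono mult_right_mono power_mono) auto
    finally have "y t^8 \<le> C" .
    moreover have "y t \<le> y t^8" if "1 \<le> y t" using that by (simp add: self_le_power)
    ultimately show ?thesis by linarith
  qed
  then show ?thesis using that[of "max 1 C"] by simp
qed

lemma ratio_tendsto: "(ratio \<longlongrightarrow> 1) at_top"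
proof -
  obtain B where "B > 0" and B: "\<And>t. 0 \<le> t \<Longrightarrow> y t \<le> B" using y_bounded by blast
  define m where "m = min (ratio 0) 1"
  have m: "m > 0" "4 * m > 1" using ratio_pos[of 0] four_ratio_gt_1[of 0] by (auto simp: m_def)
  have "((\<lambda>t. (ratio t - 1)^2) \<longlongrightarrow> 0) at_top"
  proof (rule tendsto_zero_if_deriv_bounded_away[OF ratio_dist_deriv zero_le_power2 ratio_dist_deriv_nonpos])
    fix \<epsilon> :: real assume "\<epsilon> > 0"
    define c where "c = 4 * \<beta> * (vol / B)^2 * m * (4 * m - 1) * \<epsilon>"
    have bound: "c \<le> 4 * \<beta> * (vol / y t)^2 * ratio t * (4 * ratio t - 1) * (ratio t - 1)^2"
      if "0 \<le> t" "\<epsilon> \<le> (ratio t - 1)^2" for t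
    proof -
      have "vol / B \<le> vol / y t"
        using B[OF that(1)] y_pos[OF that(1)] vol_pos by (intro divide_left_mono) auto
      moreover have "m \<le> ratio t" using ratio_between(1)[OF that(1)] by (simp add: m_def)
      ultimately show ?thesis
        unfolding c_def using that m beta_pos vol_pos \<open>B > 0\<close> \<open>\<epsilon> > 0\<close>
        by (intro mult_mono power_mono) auto
    qed
    have "c > 0"
      unfolding c_def using m beta_pos vol_pos \<open>B > 0\<close> \<open>\<epsilon> > 0\<close> by (intro mult_pos_pos) auto
    with bound show "\<exists>c>0. \<forall>t\<ge>0. \<epsilon> \<le> (ratio t - 1)^2 \<longrightarrow>
        - (4 * \<beta> * (vol / y t)^2 * ratio t * (4 * ratio t - 1) * (ratio t - 1)^2) \<le> - c"
      by auto
  qed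
  then have "((\<lambda>t. sqrt ((ratio t - 1)^2)) \<longlongrightarrow> sqrt 0) at_top"
    by (rule tendsto_real_sqrt)
  then have "((\<lambda>t. ratio t - 1) \<longlongrightarrow> 0) at_top"
    by (simp add: tendsto_rabs_zero_iff)
  then show ?thesis by (rule LIM_zero_cancel)
qed

lemma x_eq_powr:
  assumes "0 \<le> t"
  shows "x t = (vol^4 * ratio t^4 * (4 * ratio t - 1) / kappa) powr (1/8)"
proof -
  have "x t = (x t powr 8) powr (1/8)"
    using x_pos[OF assms] by (subst powr_powr) simp
  also have "x t powr 8 = vol^4 * ratio t^4 * (4 * ratio t - 1) / kappa"
    using x_pow8[OF assms] x_pos[OF assms] kappa_pos by (simp add: field_simps powr_realpow)
  finally show ?thesis .
qed

lemma x_tendsto: "(x \<longlongrightarrow> (3 / kappa) powr (1/8) * vol powr (1/2)) at_top"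
proof -
  have "((\<lambda>t. (vol^4 * ratio t^4 * (4 * ratio t - 1) / kappa) powr (1/8))
      \<longlongrightarrow> (vol^4 * 1^4 * (4 * 1 - 1) / kappa) powr (1/8)) at_top"
    using vol_pos kappa_pos by (intro tendsto_intros ratio_tendsto) auto
  then have "((\<lambda>t. (vol^4 * ratio t^4 * (4 * ratio t - 1) / kappa) powr (1/8))
      \<longlongrightarrow> (3 / kappa) powr (1/8) * vol powr (1/2)) at_top"
    using powr_limit_identities(1)[OF vol_pos kappa_pos] by (simp add: mult.commute)
  then show ?thesis
    by (rule Lim_transform_eventually) (use x_eq_powr in \<open>auto intro: eventually_mono[OF eventually_ge_at_top[of 0]]\<close>)
qed

lemma y_tendsto: "(y \<longlongrightarrow> (3 / kappa) powr (1/8) * vol powr (1/2)) at_top"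
proof -
  have "((\<lambda>t. x t / ratio t) \<longlongrightarrow> (3 / kappa) powr (1/8) * vol powr (1/2) / 1) at_top"
    by (intro tendsto_intros x_tendsto ratio_tendsto) simp
  moreover have "eventually (\<lambda>t. x t / ratio t = y t) at_top"
    using eventually_ge_at_top[of 0]
  proof (rule eventually_mono)
    fix t :: real assume "0 \<le> t"
    then show "x t / ratio t = y t" using positive[of t] by (simp add: ratio_def)
  qed
  ultimately show ?thesis by (simp add: Lim_transform_eventually)
qed

lemma w_tendsto: "(w \<longlongrightarrow> (kappa / 3) powr (3/8) * vol powr (-1/2)) at_top"
proof -
  define L where "L = (3 / kappa) powr (1/8) * vol powr (1/2)"
  have "L > 0" using kappa_pos vol_pos by (simp add: L_def)
  have "((\<lambda>t. vol / (x t * y t^2)) \<longlongrightarrow> vol / (L * L^2)) at_top"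
    using \<open>L > 0\<close> x_tendsto y_tendsto unfolding L_def[symmetric] by (intro tendsto_intros) auto
  moreover have "vol / (L * L^2) = (kappa / 3) powr (3/8) * vol powr (-1/2)"
    using powr_limit_identities(2)[OF vol_pos kappa_pos] by (simp add: L_def power3_eq_cube power2_eq_square)
  moreover have "eventually (\<lambda>t. vol / (x t * y t^2) = w t) at_top"
    using eventually_ge_at_top[of 0]
  proof (rule eventually_mono)
    fix t :: real assume "0 \<le> t"
    then show "vol / (x t * y t^2) = w t"
      using vol_const[of t] positive[of t] by (simp add: field_simps)
  qed
  ultimately show ?thesis by (metis Lim_transform_eventually)
qed

lemma strict_mono_if_x_gt_y:
  assumes "y 0 < x 0"
  shows "strict_mono_on {0..} y" and "strict_antimono_on {0..} x"
proof -
  have xy: "y t < x t" if "0 \<le> t" for t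
    using sgn_x_minus_y[OF that] assms by (simp add: sgn_if split: if_splits)
  show "strict_mono_on {0..} y"
  proof (rule strict_mono_on_nonneg_if_deriv_pos[OF y_deriv])
    fix t :: real assume "0 \<le> t"
    have "0 < \<beta> * x t^2 * (x t - y t) * (3 * x t - y t) * w t^2 * y t"
      using xy[OF \<open>0 \<le> t\<close>] positive[OF \<open>0 \<le> t\<close>] beta_pos by (intro mult_pos_pos) auto
    also have "\<dots> = - \<beta> * x t^2 * (y t - x t) * (3 * x t - y t) * w t^2 * y t"
      by algebra
    finally show "0 < - \<beta> * x t^2 * (y t - x t) * (3 * x t - y t) * w t^2 * y t" .
  qed
  show "strict_antimono_on {0..} x"
  proof (rule strict_antimono_on_nonneg_if_deriv_neg[OF x_deriv])
    fix t :: real assume "0 \<le> t"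
    have "0 < \<beta> * x t^2 * (5 * x t - y t) * (x t - y t) * w t^2 * x t"
      using xy[OF \<open>0 \<le> t\<close>] positive[OF \<open>0 \<le> t\<close>] beta_pos by (intro mult_pos_pos) auto
    then show "- \<beta> * x t^2 * (5 * x t - y t) * (x t - y t) * w t^2 * x t < 0"
      by simp
  qed
qed

lemma strict_mono_if_x_lt_y:
  assumes "x 0 < y 0"
  shows "strict_mono_on {0..} x"
proof (rule strict_mono_on_nonneg_if_deriv_pos[OF x_deriv])
  fix t :: real assume "0 \<le> t"
  have "x t < y t"
    using sgn_x_minus_y[OF \<open>0 \<le> t\<close>] assms by (simp add: sgn_if split: if_splits)
  then have "0 < \<beta> * x t^2 * (5 * x t - y t) * (y t - x t) * w t^2 * x t"
    using y_lt_4x[OF \<open>0 \<le> t\<close>] positive[OF \<open>0 \<le> t\<close>] beta_pos by (intro mult_pos_pos) auto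
  also have "\<dots> = - \<beta> * x t^2 * (5 * x t - y t) * (x t - y t) * w t^2 * x t"
    by algebra
  finally show "0 < - \<beta> * x t^2 * (5 * x t - y t) * (x t - y t) * w t^2 * x t" .
qed

end

section \<open>Global solutions of the reduced flow\<close>

lemma reduced_flow_deriv_of_ratio:
  fixes \<rho> X :: "real \<Rightarrow> real" and \<beta> D t :: real
  defines "R \<equiv> (1 - \<rho> t) * (2 * \<beta> * D^2 * \<rho> t^3 * (4 * \<rho> t - 1) / X t^2)"
  assumes "\<rho> t > 1/4" "X t > 0"
    and \<rho>_deriv: "(\<rho> has_real_derivative R) (at t)"
    and X_deriv: "(X has_real_derivative X t * (5 * \<rho> t - 1) / (2 * \<rho> t * (4 * \<rho> t - 1)) * R) (at t)"
  shows "((\<lambda>t. D * \<rho> t^2 / X t^3) has_real_derivative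
      - \<beta> * X t^2 * (X t - X t / \<rho> t)^2 * (D * \<rho> t^2 / X t^3)^3) (at t)"
    and "(X has_real_derivative - \<beta> * X t^2 * (5 * X t - X t / \<rho> t) * (X t - X t / \<rho> t)
      * (D * \<rho> t^2 / X t^3)^2 * X t) (at t)"
    and "((\<lambda>t. X t / \<rho> t) has_real_derivative - \<beta> * X t^2 * (X t / \<rho> t - X t)
      * (3 * X t - X t / \<rho> t) * (D * \<rho> t^2 / X t^3)^2 * (X t / \<rho> t)) (at t)"
proof -
  have ne: "X t \<noteq> 0" "\<rho> t \<noteq> 0" "4 * \<rho> t - 1 \<noteq> 0" using assms(2,3) by auto
  show "((\<lambda>t. D * \<rho> t^2 / X t^3) has_real_derivative
      - \<beta> * X t^2 * (X t - X t / \<rho> t)^2 * (D * \<rho> t^2 / X t^3)^3) (at t)"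
    apply (rule derivative_eq_intros \<rho>_deriv X_deriv refl | simp add: ne)+
    using ne by (simp add: R_def field_simps) algebra
  show "(X has_real_derivative - \<beta> * X t^2 * (5 * X t - X t / \<rho> t) * (X t - X t / \<rho> t)
      * (D * \<rho> t^2 / X t^3)^2 * X t) (at t)"
    by (rule DERIV_cong[OF X_deriv]) (use ne in \<open>simp add: R_def field_simps; algebra\<close>)
  show "((\<lambda>t. X t / \<rho> t) has_real_derivative - \<beta> * X t^2 * (X t / \<rho> t - X t)
      * (3 * X t - X t / \<rho> t) * (D * \<rho> t^2 / X t^3)^2 * (X t / \<rho> t)) (at t)"
    apply (rule derivative_eq_intros \<rho>_deriv X_deriv refl | simp add: ne)+
    using ne by (simp add: R_def field_simps) algebra
qed

lemma ratio_profile_exists: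
  fixes r\<^sub>0 x\<^sub>0 :: real
  assumes "r\<^sub>0 > 1/4" "x\<^sub>0 > 0"
  obtains P where "P r\<^sub>0 = x\<^sub>0" and "\<And>s. s > 1/4 \<Longrightarrow> P s > 0"
    and "\<And>s. s > 1/4 \<Longrightarrow> (P has_real_derivative P s * (5 * s - 1) / (2 * s * (4 * s - 1))) (at s)"
proof -
  define c where "c = x\<^sub>0 / (r\<^sub>0^4 * (4 * r\<^sub>0 - 1)) powr (1/8)"
  define P where "P s = c * (s^4 * (4 * s - 1)) powr (1/8)" for s
  have base_pos: "0 < s^4 * (4 * s - 1)" if "s > 1/4" for s :: real
    using that by simp
  then have root_pos: "(s^4 * (4 * s - 1)) powr (1/8) > 0" if "s > 1/4" for s :: real
    using that by (metis powr_gt_zero less_irrefl)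
  have "P r\<^sub>0 = x\<^sub>0"
    using root_pos[OF assms(1)] by (simp add: P_def c_def)
  moreover have "P s > 0" if "s > 1/4" for s
    using root_pos[OF that] root_pos[OF assms(1)] assms(2) by (simp add: P_def c_def)
  moreover have "(P has_real_derivative P s * (5 * s - 1) / (2 * s * (4 * s - 1))) (at s)"
    if "s > 1/4" for s
    unfolding P_def[abs_def]
    apply (rule derivative_eq_intros refl base_pos[OF that])+
    apply (subst powr_diff)
    using base_pos[OF that] that by (simp add: field_simps) algebra
  ultimately show ?thesis using that by blast
qed

lemma reduced_flow_exists:
  fixes \<beta> w\<^sub>0 x\<^sub>0 y\<^sub>0 :: real
  assumes "\<beta> > 0" "w\<^sub>0 > 0" "x\<^sub>0 > 0" "y\<^sub>0 > 0" "y\<^sub>0 < 4 * x\<^sub>0"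
  shows "\<exists>w x y. w 0 = w\<^sub>0 \<and> x 0 = x\<^sub>0 \<and> y 0 = y\<^sub>0 \<and> (\<forall>t\<ge>0.
      (w has_real_derivative - \<beta> * x t^2 * (x t - y t)^2 * w t^3) (at t) \<and>
      (x has_real_derivative - \<beta> * x t^2 * (5 * x t - y t) * (x t - y t) * w t^2 * x t) (at t) \<and>
      (y has_real_derivative - \<beta> * x t^2 * (y t - x t) * (3 * x t - y t) * w t^2 * y t) (at t))"
proof -
  define D where "D = w\<^sub>0 * x\<^sub>0 * y\<^sub>0^2"
  define r\<^sub>0 where "r\<^sub>0 = x\<^sub>0 / y\<^sub>0"
  have "r\<^sub>0 > 1/4" using assms by (simp add: r\<^sub>0_def field_simps)
  \<comment> \<open>the two conservation laws express \<open>x\<close> through the ratio \<open>x / y\<close> as \<open>P (x / y)\<close>\<close>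
  obtain P where "P r\<^sub>0 = x\<^sub>0" and P_pos: "\<And>s. s > 1/4 \<Longrightarrow> P s > 0"
    and P_deriv: "\<And>s. s > 1/4 \<Longrightarrow> (P has_real_derivative P s * (5 * s - 1) / (2 * s * (4 * s - 1))) (at s)"
    using ratio_profile_exists[OF \<open>r\<^sub>0 > 1/4\<close> \<open>x\<^sub>0 > 0\<close>] by blast
  define G where "G s = 2 * \<beta> * D^2 * s^3 * (4 * s - 1) / P s^2" for s
  have "continuous_on {1/4<..} G"
  proof -
    have "continuous_on {1/4<..} P"
      using DERIV_isCont[OF P_deriv] by (intro continuous_at_imp_continuous_on) simp
    moreover have "P s^2 \<noteq> 0" if "s \<in> {1/4<..}" for s
      using P_pos[of s] that by simp
    ultimately show ?thesis
      unfolding G_def by (intro continuous_intros) auto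
  qed
  moreover have "G s > 0" if "s > 1/4" for s
    using that P_pos[OF that] assms unfolding G_def D_def by (intro divide_pos_pos mult_pos_pos) auto
  ultimately obtain \<rho> where "\<rho> 0 = r\<^sub>0"
    and \<rho>: "\<And>t. 0 \<le> t \<Longrightarrow> 1/4 < \<rho> t \<and> (\<rho> has_real_derivative (1 - \<rho> t) * G (\<rho> t)) (at t)"
    using ode_solution_towards_equilibrium[of "1/4" r\<^sub>0 1 G] \<open>r\<^sub>0 > 1/4\<close> by auto
  have init: "D * r\<^sub>0^2 / x\<^sub>0^3 = w\<^sub>0" "x\<^sub>0 / r\<^sub>0 = y\<^sub>0"
    using assms by (simp_all add: D_def r\<^sub>0_def field_simps power2_eq_square power3_eq_cube)
  show ?thesis
  proof (rule exI[of _ "\<lambda>t. D * \<rho> t^2 / P (\<rho> t)^3"], rule exI[of _ "\<lambda>t. P (\<rho> t)"],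
      rule exI[of _ "\<lambda>t. P (\<rho> t) / \<rho> t"], intro conjI allI impI)
    show "D * \<rho> 0^2 / P (\<rho> 0)^3 = w\<^sub>0" "P (\<rho> 0) = x\<^sub>0" "P (\<rho> 0) / \<rho> 0 = y\<^sub>0"
      using \<open>\<rho> 0 = r\<^sub>0\<close> \<open>P r\<^sub>0 = x\<^sub>0\<close> init by simp_all
    fix t :: real assume "0 \<le> t"
    then have "1/4 < \<rho> t" and \<rho>_deriv: "(\<rho> has_real_derivative (1 - \<rho> t) * G (\<rho> t)) (at t)"
      using \<rho> by auto
    from DERIV_chain2[OF P_deriv[OF \<open>1/4 < \<rho> t\<close>] \<rho>_deriv]
    have "((\<lambda>t. P (\<rho> t)) has_real_derivative P (\<rho> t) * (5 * \<rho> t - 1) / (2 * \<rho> t * (4 * \<rho> t - 1))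
        * ((1 - \<rho> t) * G (\<rho> t))) (at t)" .
    note derivs = reduced_flow_deriv_of_ratio[OF \<open>1/4 < \<rho> t\<close> P_pos[OF \<open>1/4 < \<rho> t\<close>]
        \<rho>_deriv[unfolded G_def] this[unfolded G_def]]
    show "((\<lambda>t. D * \<rho> t^2 / P (\<rho> t)^3) has_real_derivative - \<beta> * P (\<rho> t)^2
        * (P (\<rho> t) - P (\<rho> t) / \<rho> t)^2 * (D * \<rho> t^2 / P (\<rho> t)^3)^3) (at t)"
      by (rule derivs(1))
    show "((\<lambda>t. P (\<rho> t)) has_real_derivative - \<beta> * P (\<rho> t)^2 * (5 * P (\<rho> t) - P (\<rho> t) / \<rho> t)
        * (P (\<rho> t) - P (\<rho> t) / \<rho> t) * (D * \<rho> t^2 / P (\<rho> t)^3)^2 * P (\<rho> t)) (at t)"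
      by (rule derivs(2))
    show "((\<lambda>t. P (\<rho> t) / \<rho> t) has_real_derivative - \<beta> * P (\<rho> t)^2 * (P (\<rho> t) / \<rho> t - P (\<rho> t))
        * (3 * P (\<rho> t) - P (\<rho> t) / \<rho> t) * (D * \<rho> t^2 / P (\<rho> t)^3)^2 * (P (\<rho> t) / \<rho> t)) (at t)"
      by (rule derivs(3))
  qed
qed

section \<open>Reduction of (S3)\<close>

lemma bach_p_rotate: "bach_p z x y = bach_p x y z"
  unfolding bach_p_def by algebra

lemma bach_p_two_equal: "bach_p x y y = x^2 * (x - y)^2"
  unfolding bach_p_def by algebra

lemma bach_q_two_equal:
  "bach_q x y y = x^2 * (5 * x - y) * (x - y)" "bach_q y y x = x^2 * (y - x) * (3 * x - y)"
  "bach_q y x y = x^2 * (y - x) * (3 * x - y)"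
  unfolding bach_q_def by algebra+

lemma bach_beta_pos: "dh \<noteq> 0 \<Longrightarrow> bach_beta dh > 0"
  by (simp add: bach_beta_def)

lemma solves_S3_rotate:
  assumes "solves_S3 h\<^sub>0 h\<^sub>1 h\<^sub>2 h\<^sub>3 g\<^sub>0 g\<^sub>1 g\<^sub>2 g\<^sub>3"
  shows "solves_S3 h\<^sub>0 h\<^sub>3 h\<^sub>1 h\<^sub>2 g\<^sub>0 g\<^sub>3 g\<^sub>1 g\<^sub>2"
proof -
  have prod: "h\<^sub>0 * h\<^sub>3 * h\<^sub>1 * h\<^sub>2 = h\<^sub>0 * h\<^sub>1 * h\<^sub>2 * h\<^sub>3" by (simp add: mult_ac)
  have p: "bach_p (g\<^sub>3 t) (g\<^sub>1 t) (g\<^sub>2 t) = bach_p (g\<^sub>1 t) (g\<^sub>2 t) (g\<^sub>3 t)" for t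
    by (rule bach_p_rotate)
  show ?thesis using assms unfolding solves_S3_def Let_def prod p by simp
qed

lemma S3_equal_coordinates_stay_equal:
  fixes g\<^sub>0 g\<^sub>a g\<^sub>b g\<^sub>c :: "real \<Rightarrow> real" and \<beta> :: real
  assumes d\<^sub>a: "\<And>t. 0 \<le> t \<Longrightarrow>
      (g\<^sub>a has_real_derivative - \<beta> * bach_q (g\<^sub>a t) (g\<^sub>b t) (g\<^sub>c t) * g\<^sub>0 t^2 * g\<^sub>a t) (at t within {0..})"
    and d\<^sub>b: "\<And>t. 0 \<le> t \<Longrightarrow>
      (g\<^sub>b has_real_derivative - \<beta> * bach_q (g\<^sub>b t) (g\<^sub>c t) (g\<^sub>a t) * g\<^sub>0 t^2 * g\<^sub>b t) (at t within {0..})"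
    and "continuous_on {0..} g\<^sub>0" "continuous_on {0..} g\<^sub>c"
    and "g\<^sub>a 0 = g\<^sub>b 0" "0 \<le> t"
  shows "g\<^sub>a t = g\<^sub>b t"
proof -
  \<comment> \<open>\<open>bach_q a b c * a - bach_q b c a * b\<close> vanishes at \<open>a = b\<close>; this is its cofactor\<close>
  define \<Psi> where "\<Psi> a b c = 5*a^4 + 5*a^3*b - 3*a^3*c + 4*a^2*b^2 - 5*a^2*b*c + 5*a*b^3
    - 5*a*b^2*c - a*b*c^2 + a*c^3 + 5*b^4 - 3*b^3*c + b*c^3 - 3*c^4" for a b c :: real
  have "sgn (g\<^sub>a t - g\<^sub>b t) = sgn (g\<^sub>a 0 - g\<^sub>b 0)"
  proof (rule linear_ode_sgn[OF _ _ \<open>0 \<le> t\<close>])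
    show "((\<lambda>t. g\<^sub>a t - g\<^sub>b t) has_real_derivative
        (- \<beta> * g\<^sub>0 s^2 * \<Psi> (g\<^sub>a s) (g\<^sub>b s) (g\<^sub>c s)) * (g\<^sub>a s - g\<^sub>b s)) (at s within {0..})"
      if "0 \<le> s" for s
      by (rule DERIV_cong[OF DERIV_diff[OF d\<^sub>a[OF that] d\<^sub>b[OF that]]])
        (simp add: \<Psi>_def bach_q_def, algebra)
    show "continuous_on {0..} (\<lambda>s. - \<beta> * g\<^sub>0 s^2 * \<Psi> (g\<^sub>a s) (g\<^sub>b s) (g\<^sub>c s))"
      unfolding \<Psi>_def using assms(3,4) continuous_on_nonneg_if_deriv[OF d\<^sub>a]
        continuous_on_nonneg_if_deriv[OF d\<^sub>b]
      by (intro continuous_intros)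
  qed
  with \<open>g\<^sub>a 0 = g\<^sub>b 0\<close> show ?thesis by (simp add: sgn_eq_0_iff)
qed

lemma S3_reduces_if_h2_eq_h3:
  assumes S: "solves_S3 h\<^sub>0 h\<^sub>1 h\<^sub>2 h\<^sub>3 g\<^sub>0 g\<^sub>1 g\<^sub>2 g\<^sub>3"
    and pos: "h\<^sub>0 > 0" "h\<^sub>1 > 0" "h\<^sub>2 > 0" and "h\<^sub>2 = h\<^sub>3" "h\<^sub>2 < 4 * h\<^sub>1"
  shows "\<forall>t\<ge>0. g\<^sub>3 t = g\<^sub>2 t" and "bach_reduced_flow (bach_beta (h\<^sub>0 * h\<^sub>1 * h\<^sub>2 * h\<^sub>3)) g\<^sub>0 g\<^sub>1 g\<^sub>2"
proof -
  define \<beta> where "\<beta> = bach_beta (h\<^sub>0 * h\<^sub>1 * h\<^sub>2 * h\<^sub>3)"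
  from S have init: "g\<^sub>0 0 = h\<^sub>0" "g\<^sub>1 0 = h\<^sub>1" "g\<^sub>2 0 = h\<^sub>2" "g\<^sub>3 0 = h\<^sub>3"
    and d\<^sub>0: "\<And>t. 0 \<le> t \<Longrightarrow>
      (g\<^sub>0 has_real_derivative - \<beta> * bach_p (g\<^sub>1 t) (g\<^sub>2 t) (g\<^sub>3 t) * g\<^sub>0 t^3) (at t within {0..})"
    and d\<^sub>1: "\<And>t. 0 \<le> t \<Longrightarrow>
      (g\<^sub>1 has_real_derivative - \<beta> * bach_q (g\<^sub>1 t) (g\<^sub>2 t) (g\<^sub>3 t) * g\<^sub>0 t^2 * g\<^sub>1 t) (at t within {0..})"
    and d\<^sub>2: "\<And>t. 0 \<le> t \<Longrightarrow>
      (g\<^sub>2 has_real_derivative - \<beta> * bach_q (g\<^sub>2 t) (g\<^sub>3 t) (g\<^sub>1 t) * g\<^sub>0 t^2 * g\<^sub>2 t) (at t within {0..})"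
    and d\<^sub>3: "\<And>t. 0 \<le> t \<Longrightarrow>
      (g\<^sub>3 has_real_derivative - \<beta> * bach_q (g\<^sub>3 t) (g\<^sub>1 t) (g\<^sub>2 t) * g\<^sub>0 t^2 * g\<^sub>3 t) (at t within {0..})"
    unfolding solves_S3_def Let_def \<beta>_def by auto
  have eq: "g\<^sub>3 t = g\<^sub>2 t" if "0 \<le> t" for t
    using S3_equal_coordinates_stay_equal[OF d\<^sub>2 d\<^sub>3 continuous_on_nonneg_if_deriv[OF d\<^sub>0]
        continuous_on_nonneg_if_deriv[OF d\<^sub>1] _ that] init \<open>h\<^sub>2 = h\<^sub>3\<close>
    by simp
  then show "\<forall>t\<ge>0. g\<^sub>3 t = g\<^sub>2 t" by blast
  show "bach_reduced_flow \<beta> g\<^sub>0 g\<^sub>1 g\<^sub>2"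
  proof
    show "\<beta> > 0" using pos \<open>h\<^sub>2 = h\<^sub>3\<close> by (simp add: \<beta>_def bach_beta_pos)
  qed (use init pos \<open>h\<^sub>2 < 4 * h\<^sub>1\<close> d\<^sub>0 d\<^sub>1 d\<^sub>2 eq in \<open>simp_all add: bach_p_two_equal bach_q_two_equal mult.assoc\<close>)
qed

lemma S3_exists_if_h2_eq_h3:
  assumes "h\<^sub>0 > 0" "h\<^sub>1 > 0" "h\<^sub>2 > 0" "h\<^sub>2 = h\<^sub>3" "h\<^sub>2 < 4 * h\<^sub>1"
  shows "\<exists>g\<^sub>0 g\<^sub>1 g\<^sub>2 g\<^sub>3. solves_S3 h\<^sub>0 h\<^sub>1 h\<^sub>2 h\<^sub>3 g\<^sub>0 g\<^sub>1 g\<^sub>2 g\<^sub>3"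
proof -
  define \<beta> where "\<beta> = bach_beta (h\<^sub>0 * h\<^sub>1 * h\<^sub>2 * h\<^sub>3)"
  have "\<beta> > 0" using assms by (simp add: \<beta>_def bach_beta_pos)
  then obtain w x y where "w 0 = h\<^sub>0" "x 0 = h\<^sub>1" "y 0 = h\<^sub>2" and d: "\<forall>t\<ge>0.
      (w has_real_derivative - \<beta> * x t^2 * (x t - y t)^2 * w t^3) (at t) \<and>
      (x has_real_derivative - \<beta> * x t^2 * (5 * x t - y t) * (x t - y t) * w t^2 * x t) (at t) \<and>
      (y has_real_derivative - \<beta> * x t^2 * (y t - x t) * (3 * x t - y t) * w t^2 * y t) (at t)"
    using reduced_flow_exists[OF _ assms(1-3,5)] by blast
  then have "solves_S3 h\<^sub>0 h\<^sub>1 h\<^sub>2 h\<^sub>3 w x y y"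
    unfolding solves_S3_def Let_def \<beta>_def[symmetric] using \<open>h\<^sub>2 = h\<^sub>3\<close>
    by (auto simp: bach_p_two_equal bach_q_two_equal mult.assoc intro: has_field_derivative_at_within)
  then show ?thesis by blast
qed

lemma S3_properties_if_h2_eq_h3:
  assumes S: "solves_S3 h\<^sub>0 h\<^sub>1 h\<^sub>2 h\<^sub>3 g\<^sub>0 g\<^sub>1 g\<^sub>2 g\<^sub>3"
    and pos: "h\<^sub>0 > 0" "h\<^sub>1 > 0" "h\<^sub>2 > 0" and "h\<^sub>2 = h\<^sub>3" "h\<^sub>2 < 4 * h\<^sub>1"
  defines "dh \<equiv> h\<^sub>0 * h\<^sub>1 * h\<^sub>2 * h\<^sub>3"
  defines "\<kappa> \<equiv> (4 * dh - h\<^sub>0 * h\<^sub>2^3) * h\<^sub>0^3 * h\<^sub>2"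
  shows "\<forall>t\<ge>0. (4 * dh - g\<^sub>0 t * g\<^sub>2 t^3) * g\<^sub>0 t^3 * g\<^sub>2 t = \<kappa>"
    and "\<forall>t\<ge>0. (4 * dh - g\<^sub>0 t * g\<^sub>3 t^3) * g\<^sub>0 t^3 * g\<^sub>3 t = \<kappa>"
    and "(g\<^sub>0 \<longlongrightarrow> (\<kappa> / 3) powr (3/8) * dh powr (-1/2)) at_top"
    and "(g\<^sub>1 \<longlongrightarrow> (3 / \<kappa>) powr (1/8) * dh powr (1/2)) at_top"
    and "(g\<^sub>2 \<longlongrightarrow> (3 / \<kappa>) powr (1/8) * dh powr (1/2)) at_top"
    and "(g\<^sub>3 \<longlongrightarrow> (3 / \<kappa>) powr (1/8) * dh powr (1/2)) at_top"
    and "h\<^sub>1 < h\<^sub>2 \<Longrightarrow> strict_mono_on {0..} g\<^sub>1"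
    and "h\<^sub>2 < h\<^sub>1 \<Longrightarrow> strict_antimono_on {0..} g\<^sub>1 \<and> strict_mono_on {0..} g\<^sub>2 \<and> strict_mono_on {0..} g\<^sub>3"
proof -
  have eq: "\<forall>t\<ge>0. g\<^sub>3 t = g\<^sub>2 t" and flow: "bach_reduced_flow (bach_beta dh) g\<^sub>0 g\<^sub>1 g\<^sub>2"
    using S3_reduces_if_h2_eq_h3[OF S pos \<open>h\<^sub>2 = h\<^sub>3\<close> \<open>h\<^sub>2 < 4 * h\<^sub>1\<close>] by (simp_all add: dh_def)
  interpret bach_reduced_flow "bach_beta dh" g\<^sub>0 g\<^sub>1 g\<^sub>2 by (rule flow)
  have init: "g\<^sub>0 0 = h\<^sub>0" "g\<^sub>1 0 = h\<^sub>1" "g\<^sub>2 0 = h\<^sub>2" using S by (simp_all add: solves_S3_def Let_def)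
  then have "vol = dh" "kappa = \<kappa>"
    using \<open>h\<^sub>2 = h\<^sub>3\<close> by (simp_all add: vol_def kappa_def dh_def \<kappa>_def power2_eq_square)
  have g\<^sub>3_eq: "eventually (\<lambda>t. g\<^sub>2 t = g\<^sub>3 t) at_top"
    using eq unfolding eventually_at_top_linorder by (metis order_refl)
  show "\<forall>t\<ge>0. (4 * dh - g\<^sub>0 t * g\<^sub>2 t^3) * g\<^sub>0 t^3 * g\<^sub>2 t = \<kappa>"
    using kappa_invariant \<open>vol = dh\<close> \<open>kappa = \<kappa>\<close> by simp
  then show "\<forall>t\<ge>0. (4 * dh - g\<^sub>0 t * g\<^sub>3 t^3) * g\<^sub>0 t^3 * g\<^sub>3 t = \<kappa>"
    using eq by simp
  show "(g\<^sub>0 \<longlongrightarrow> (\<kappa> / 3) powr (3/8) * dh powr (-1/2)) at_top"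
    using w_tendsto \<open>vol = dh\<close> \<open>kappa = \<kappa>\<close> by simp
  show g\<^sub>2_lim: "(g\<^sub>2 \<longlongrightarrow> (3 / \<kappa>) powr (1/8) * dh powr (1/2)) at_top"
    using y_tendsto \<open>vol = dh\<close> \<open>kappa = \<kappa>\<close> by simp
  then show "(g\<^sub>3 \<longlongrightarrow> (3 / \<kappa>) powr (1/8) * dh powr (1/2)) at_top"
    using tendsto_cong[OF g\<^sub>3_eq] by simp
  show "(g\<^sub>1 \<longlongrightarrow> (3 / \<kappa>) powr (1/8) * dh powr (1/2)) at_top"
    using x_tendsto \<open>vol = dh\<close> \<open>kappa = \<kappa>\<close> by simp
  show "h\<^sub>1 < h\<^sub>2 \<Longrightarrow> strict_mono_on {0..} g\<^sub>1"
    using strict_mono_if_x_lt_y init by simp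
  assume "h\<^sub>2 < h\<^sub>1"
  then have "strict_mono_on {0..} g\<^sub>2" "strict_antimono_on {0..} g\<^sub>1"
    using strict_mono_if_x_gt_y init by simp_all
  moreover have "strict_mono_on {0..} g\<^sub>3"
    using \<open>strict_mono_on {0..} g\<^sub>2\<close> eq by (auto simp: monotone_on_def)
  ultimately show "strict_antimono_on {0..} g\<^sub>1 \<and> strict_mono_on {0..} g\<^sub>2 \<and> strict_mono_on {0..} g\<^sub>3"
    by blast
qed

lemma S3_properties_if_h1_eq_h2:
  assumes S: "solves_S3 h\<^sub>0 h\<^sub>1 h\<^sub>2 h\<^sub>3 g\<^sub>0 g\<^sub>1 g\<^sub>2 g\<^sub>3"
    and pos: "h\<^sub>0 > 0" "h\<^sub>1 > 0" "h\<^sub>3 > 0" and "h\<^sub>1 = h\<^sub>2" "h\<^sub>2 < h\<^sub>3"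
  defines "dh \<equiv> h\<^sub>0 * h\<^sub>1 * h\<^sub>2 * h\<^sub>3"
  defines "\<kappa> \<equiv> (4 * dh - h\<^sub>0 * h\<^sub>2^3) * h\<^sub>0^3 * h\<^sub>2"
  shows "\<forall>t\<ge>0. (4 * dh - g\<^sub>0 t * g\<^sub>2 t^3) * g\<^sub>0 t^3 * g\<^sub>2 t = \<kappa>"
    and "(g\<^sub>0 \<longlongrightarrow> (\<kappa> / 3) powr (3/8) * dh powr (-1/2)) at_top"
    and "(g\<^sub>1 \<longlongrightarrow> (3 / \<kappa>) powr (1/8) * dh powr (1/2)) at_top"
    and "(g\<^sub>2 \<longlongrightarrow> (3 / \<kappa>) powr (1/8) * dh powr (1/2)) at_top"
    and "(g\<^sub>3 \<longlongrightarrow> (3 / \<kappa>) powr (1/8) * dh powr (1/2)) at_top"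
    and "strict_mono_on {0..} g\<^sub>1" "strict_mono_on {0..} g\<^sub>2" "strict_antimono_on {0..} g\<^sub>3"
proof -
  have "h\<^sub>0 * h\<^sub>3 * h\<^sub>1 * h\<^sub>2 = dh" and "(4 * dh - h\<^sub>0 * h\<^sub>1^3) * h\<^sub>0^3 * h\<^sub>1 = \<kappa>"
    using \<open>h\<^sub>1 = h\<^sub>2\<close> by (simp_all add: dh_def \<kappa>_def mult_ac)
  moreover have "h\<^sub>1 < 4 * h\<^sub>3" using assms(5,6) pos by simp
  \<comment> \<open>relabelling \<open>(g\<^sub>1, g\<^sub>2, g\<^sub>3)\<close> as \<open>(g\<^sub>3, g\<^sub>1, g\<^sub>2)\<close> turns \<open>h\<^sub>1 = h\<^sub>2\<close> into \<open>h\<^sub>2 = h\<^sub>3\<close>\<close>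
  note P = S3_properties_if_h2_eq_h3[OF solves_S3_rotate[OF S] pos(1,3,2) \<open>h\<^sub>1 = h\<^sub>2\<close> this]
  ultimately show "\<forall>t\<ge>0. (4 * dh - g\<^sub>0 t * g\<^sub>2 t^3) * g\<^sub>0 t^3 * g\<^sub>2 t = \<kappa>"
    and "(g\<^sub>0 \<longlongrightarrow> (\<kappa> / 3) powr (3/8) * dh powr (-1/2)) at_top"
    and "(g\<^sub>1 \<longlongrightarrow> (3 / \<kappa>) powr (1/8) * dh powr (1/2)) at_top"
    and "(g\<^sub>2 \<longlongrightarrow> (3 / \<kappa>) powr (1/8) * dh powr (1/2)) at_top"
    and "(g\<^sub>3 \<longlongrightarrow> (3 / \<kappa>) powr (1/8) * dh powr (1/2)) at_top"
    and "strict_mono_on {0..} g\<^sub>1" "strict_mono_on {0..} g\<^sub>2" "strict_antimono_on {0..} g\<^sub>3"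
    using \<open>h\<^sub>1 = h\<^sub>2\<close> \<open>h\<^sub>2 < h\<^sub>3\<close> by simp_all
qed

theorem theorem5p17:
  fixes h0 h1 h2 h3 :: real
  assumes pos: "h0 > 0" "h1 > 0" "h2 > 0" "h3 > 0"
    and cases: "(h1 = h2 \<and> h2 < h3) \<or> (h1 < h2 \<and> h2 = h3 \<and> h3 < 4 * h1)"
  defines "dh \<equiv> h0 * h1 * h2 * h3"
  defines "\<kappa> \<equiv> (4 * dh - h0 * h2^3) * h0^3 * h2"
  shows "(\<exists>g0 g1 g2 g3. solves_S3 h0 h1 h2 h3 g0 g1 g2 g3) \<and>
    (\<forall>g0 g1 g2 g3. solves_S3 h0 h1 h2 h3 g0 g1 g2 g3 \<longrightarrow>
       (\<forall>t\<ge>0. (4 * dh - g0 t * (g2 t)^3) * (g0 t)^3 * g2 t = \<kappa>) \<and>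
       (g0 \<longlongrightarrow> (\<kappa> / 3) powr (3/8) * dh powr (-1/2)) at_top \<and>
       (g1 \<longlongrightarrow> (3 / \<kappa>) powr (1/8) * dh powr (1/2)) at_top \<and>
       (g2 \<longlongrightarrow> (3 / \<kappa>) powr (1/8) * dh powr (1/2)) at_top \<and>
       (g3 \<longlongrightarrow> (3 / \<kappa>) powr (1/8) * dh powr (1/2)) at_top \<and>
       (h1 = h2 \<longrightarrow> strict_mono_on {0..} g1 \<and> strict_mono_on {0..} g2 \<and>
                     strict_antimono_on {0..} g3) \<and>
       (h2 = h3 \<longrightarrow> strict_mono_on {0..} g1))"
proof (cases "h1 = h2")
  case True
  with cases pos have "h2 < h3" "h1 < 4 * h3" by auto
  obtain g0 g1 g2 g3 where "solves_S3 h0 h3 h1 h2 g0 g1 g2 g3"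
    using S3_exists_if_h2_eq_h3[OF pos(1,4,2) True \<open>h1 < 4 * h3\<close>] by blast
  then have "\<exists>g0 g1 g2 g3. solves_S3 h0 h1 h2 h3 g0 g1 g2 g3"
    using solves_S3_rotate[OF solves_S3_rotate] by blast
  with S3_properties_if_h1_eq_h2[OF _ pos(1,2,4) True \<open>h2 < h3\<close>] \<open>h2 < h3\<close>
  show ?thesis unfolding dh_def \<kappa>_def by auto
next
  case False
  with cases have "h2 = h3" "h2 < 4 * h1" "h1 < h2" by auto
  with S3_exists_if_h2_eq_h3[OF pos(1-3) this(1,2)] S3_properties_if_h2_eq_h3[OF _ pos(1-3) this(1,2)]
  show ?thesis unfolding dh_def \<kappa>_def by auto
qed

end
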